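(* Let $G=(m,n,\boldsymbol{c},\boldsymbol{d},r_{\max},r_{\min})$ be an interbank lending game. Then the continuous-time best-response dynamics $$\frac{ds_i(t)}{dt}=\hat s_i(t)-s_i(t),\qquad \hat s_i(t)\in\mathrm{BR}_i(\boldsymbol{s}(t)),\qquad i\in L,$$ converges to the unique pure Nash equilibrium $\boldsymbol{s}^*$ of $G$ from any initial state $\boldsymbol{s}(0)\in\boldsymbol{S}$, i.e. $\boldsymbol{s}(t)\to\boldsymbol{s}^*$ as $t\to\infty$.
   Context: An interbank lending game $G=(m,n,\boldsymbol{c},\boldsymbol{d},r_{\max},r_{\min})$ consists of positive integers $m,n$, budgets $\boldsymbol{c}\in\mathbb{R}_{>0}^m$, demands $\boldsymbol{d}\in\mathbb{R}_{>0}^n$ and reals $0<r_{\min}<r_{\max}$. The players are the lenders $L=\{1,\dots,m\}$; $B=\{1,\dots,n\}$ is the set of borrowers. Lender $i$'s strategy set is $S_i=\{s_i\in\mathbb{R}_{\ge0}^n:\sum_{j\in B}s_{ij}\le c_i\}$, the strategy space is $\boldsymbol{S}=\prod_{i\in L}S_i$ with elements $\boldsymbol{s}=(s_{ij})$. The interest rate of borrower $j$ is $r_j(\boldsymbol{s})=(r_{\min}-r_{\max})\frac{\sum_{i\in L}s_{ij}}{d_j}+r_{\max}$ and lender $i$'s utility is $u_i(\boldsymbol{s})=\sum_{j\in B}(r_j(\boldsymbol{s})-r_{\min})s_{ij}$. A pure Nash equilibrium is $\boldsymbol{s}^*\in\boldsymbol{S}$ with $u_i(\boldsymbol{s}^*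 )\ge u_i(s_i,\boldsymbol{s}^*_{-i})$ for all $i\in L$, $s_i\in S_i$; $G$ has exactly one. Lender $i$'s best-response set at $\boldsymbol{s}$ is $\mathrm{BR}_i(\boldsymbol{s})=\arg\max\{u_i(z_i,\boldsymbol{s}_{-i}):z_i\in S_i\}$; in these games it is a singleton for every $\boldsymbol{s}\in\boldsymbol{S}$, so the dynamics above is an ordinary differential equation. *)

theory Defs
  imports "HOL-Analysis.Analysis"
begin

text \<open>Lenders are indexed by the finite type 'm (so m = CARD('m)),
borrowers by the finite type 'n (n = CARD('n)). A strategy profile is a matrix
s :: real^'n^'m with s $ i $ j the amount lender i lends to borrower j.
The game data are c (budgets), d (demands), rmax, rmin.\<close>

definition strat_set :: "real^'m \<Rightarrow> 'm \<Rightarrow> (real^'n) set" where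
  "strat_set c i = {si. (\<forall>j. si $ j \<ge> 0) \<and> (\<Sum>j\<in>UNIV. si $ j) \<le> c $ i}"

definition strat_space :: "real^'m \<Rightarrow> (real^'n^'m) set" where
  "strat_space c = {s. \<forall>i. s $ i \<in> strat_set c i}"

definition rate :: "real^'n \<Rightarrow> real \<Rightarrow> real \<Rightarrow> real^'n^'m \<Rightarrow> 'n \<Rightarrow> real" where
  "rate d rmax rmin s j = (rmin - rmax) * (\<Sum>i\<in>UNIV. s $ i $ j) / d $ j + rmax"

definition utility :: "real^'n \<Rightarrow> real \<Rightarrow> real \<Rightarrow> real^'n^'m \<Rightarrow> 'm \<Rightarrow> real" where
  "utility d rmax rmin s i = (\<Sum>j\<in>UNIV. (rate d rmax rmin s j - rmin) * s $ i $ j)"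

definition replace_strat :: "real^'n^'m \<Rightarrow> 'm \<Rightarrow> real^'n \<Rightarrow> real^'n^'m" where
  "replace_strat s i z = (\<chi> k. if k = i then z else s $ k)"

definition is_pure_NE :: "real^'m \<Rightarrow> real^'n \<Rightarrow> real \<Rightarrow> real \<Rightarrow> real^'n^'m \<Rightarrow> bool" where
  "is_pure_NE c d rmax rmin s \<longleftrightarrow> s \<in> strat_space c \<and>
     (\<forall>i. \<forall>z\<in>strat_set c i.
        utility d rmax rmin s i \<ge> utility d rmax rmin (replace_strat s i z) i)"

definition best_resp :: "real^'m \<Rightarrow> real^'n \<Rightarrow> real \<Rightarrow> real \<Rightarrow> 'm \<Rightarrow> real^'n^'m \<Rightarrow> (real^'n) set" where
  "best_resp c d rmax rmin i s = {z \<in> strat_set c i. \<forall>z'\<in>strat_set c i.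
      utility d rmax rmin (replace_strat s i z) i \<ge> utility d rmax rmin (replace_strat s i z') i}"

end

(* Under a unilateral deviation, lender i's utility changes by (rmax - rmin) times the change of
   the concave quadratic potential P(s) = sum_j (T_j - (sum_i s_ij^2 + T_j^2) / (2 d_j)), where
   T_j = sum_i s_ij; so G is a weighted potential game, and P is strongly concave for the weighted
   norm sum_ij s_ij^2 / d_j. A maximiser of P over the compact polytope S is an equilibrium, and
   every equilibrium e satisfies the first-order condition <grad P e, s - e> <= 0 on S, which
   together with strong concavity makes it the unique one.
   Along the dynamics d/dt P(s) = <grad P s, shat - s>. Comparing each best response with the
   midpoint between s_i and e_i bounds this from below by (P e - P s) / 2, so the gap P e - P s(t)
   decays like exp(-t/2), and strong concavity turns this into s(t) -> e. The trajectory stays in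
   S because each inequality defining S is linear and holds at the target shat(t). *)

theory Submission
  imports Defs "HOL-Real_Asymp.Real_Asymp"
begin

definition total_loans :: "real^'n^'m \<Rightarrow> 'n \<Rightarrow> real" where
  "total_loans s j = (\<Sum>i\<in>UNIV. s $ i $ j)"

definition potential :: "real^'n \<Rightarrow> real^'n^'m \<Rightarrow> real" where
  "potential d s = (\<Sum>j\<in>UNIV. total_loans s j
     - ((\<Sum>i\<in>UNIV. (s $ i $ j)\<^sup>2) + (total_loans s j)\<^sup>2) / (2 * d $ j))"

definition potential_marginal :: "real^'n \<Rightarrow> real^'n^'m \<Rightarrow> 'm \<Rightarrow> 'n \<Rightarrow> real" where
  "potential_marginal d s i j = 1 - (total_loans s j + s $ i $ j) / d $ j"

definition potential_deriv :: "real^'n \<Rightarrow> real^'n^'m \<Rightarrow> real^'n^'m \<Rightarrow> real" where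
  "potential_deriv d s v = (\<Sum>i\<in>UNIV. \<Sum>j\<in>UNIV. potential_marginal d s i j * v $ i $ j)"

definition potential_quad :: "real^'n \<Rightarrow> real^'n^'m \<Rightarrow> real" where
  "potential_quad d v = (\<Sum>j\<in>UNIV. ((\<Sum>i\<in>UNIV. (v $ i $ j)\<^sup>2) + (total_loans v j)\<^sup>2) / d $ j)"

definition weighted_sqnorm :: "real^'n \<Rightarrow> real^'n^'m \<Rightarrow> real" where
  "weighted_sqnorm d v = (\<Sum>i\<in>UNIV. \<Sum>j\<in>UNIV. (v $ i $ j)\<^sup>2 / d $ j)"

definition deviation_gain :: "real^'n \<Rightarrow> real^'n^'m \<Rightarrow> 'm \<Rightarrow> real^'n \<Rightarrow> real" where
  "deviation_gain d s i z = (\<Sum>j\<in>UNIV. potential_marginal d s i j * (z $ j - s $ i $ j))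
     - (\<Sum>j\<in>UNIV. (z $ j - s $ i $ j)\<^sup>2 / d $ j)"

lemma total_loans_diff: "total_loans (y - x) j = total_loans y j - total_loans x j"
  by (simp add: total_loans_def sum_subtractf)

lemma replace_strat_nth: "replace_strat s i z $ k = (if k = i then z else s $ k)"
  by (simp add: replace_strat_def)

lemma total_loans_replace_strat:
  "total_loans (replace_strat s i z) j = total_loans s j - s $ i $ j + z $ j"
proof -
  have "total_loans (replace_strat s i z) j = (\<Sum>k\<in>UNIV. s $ k $ j + (if k = i then z $ j - s $ i $ j else 0))"
    unfolding total_loans_def replace_strat_nth by (rule sum.cong) auto
  then show ?thesis by (simp add: sum.distrib total_loans_def)
qed

lemma potential_deriv_by_columns:
  "potential_deriv d x v = (\<Sum>j\<in>UNIV. total_loans v j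
     - (total_loans x j * total_loans v j + (\<Sum>i\<in>UNIV. x $ i $ j * v $ i $ j)) / d $ j)"
proof -
  have "(\<Sum>i\<in>UNIV. potential_marginal d x i j * v $ i $ j)
      = (\<Sum>i\<in>UNIV. v $ i $ j - (total_loans x j * v $ i $ j + x $ i $ j * v $ i $ j) / d $ j)" for j
    by (simp add: potential_marginal_def algebra_simps diff_divide_distrib add_divide_distrib)
  also have "\<dots> j = total_loans v j
     - (total_loans x j * total_loans v j + (\<Sum>i\<in>UNIV. x $ i $ j * v $ i $ j)) / d $ j" for j
    by (simp add: total_loans_def[of v] sum_subtractf sum.distrib sum_distrib_left sum_divide_distrib[symmetric])
  finally show ?thesis
    unfolding potential_deriv_def by (subst sum.swap) simp
qed

lemma bounded_linear_vec_nth_nth: "bounded_linear (\<lambda>x. x $ i $ j)"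
  by (rule bounded_linear_compose[OF bounded_linear_vec_nth bounded_linear_vec_nth])

lemma has_derivative_vec_nth_nth [derivative_intros]:
  "((\<lambda>x. x $ i $ j) has_derivative (\<lambda>v. v $ i $ j)) F"
  by (rule bounded_linear_imp_has_derivative[OF bounded_linear_vec_nth_nth])

lemma has_derivative_potential:
  fixes d :: "real^'n::finite" and x :: "real^'n^'m::finite"
  assumes d_pos: "\<forall>j. d $ j > 0"
  shows "(potential d has_derivative potential_deriv d x) (at x within X)"
proof -
  have "(potential d has_derivative (\<lambda>v. \<Sum>j\<in>UNIV. total_loans v j
     - ((\<Sum>i\<in>UNIV. 2 * x $ i $ j * v $ i $ j) + 2 * total_loans x j * total_loans v j) / (2 * d $ j)))
     (at x within X)"
    unfolding potential_def[abs_def] total_loans_def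
    using d_pos by (intro derivative_eq_intros ext) (auto simp: mult_ac less_le)
  also have "(\<lambda>v. \<Sum>j\<in>UNIV. total_loans v j
     - ((\<Sum>i\<in>UNIV. 2 * x $ i $ j * v $ i $ j) + 2 * total_loans x j * total_loans v j) / (2 * d $ j))
    = potential_deriv d x"
  proof -
    have "((\<Sum>i\<in>UNIV. 2 * x $ i $ j * v $ i $ j) + 2 * total_loans x j * total_loans v j) / (2 * d $ j)
        = (total_loans x j * total_loans v j + (\<Sum>i\<in>UNIV. x $ i $ j * v $ i $ j)) / d $ j" for j v
    proof -
      have "(\<Sum>i\<in>UNIV. 2 * x $ i $ j * v $ i $ j) = 2 * (\<Sum>i\<in>UNIV. x $ i $ j * v $ i $ j)"
        by (simp add: sum_distrib_left mult.assoc)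
      then show ?thesis by (simp add: add_divide_distrib)
    qed
    then show ?thesis
      unfolding potential_deriv_by_columns by simp
  qed
  finally show ?thesis .
qed

lemma potential_expansion:
  fixes d :: "real^'n::finite" and x y :: "real^'n^'m::finite"
  assumes d_pos: "\<forall>j. d $ j > 0"
  shows "potential d y = potential d x + potential_deriv d x (y - x) - potential_quad d (y - x) / 2"
proof -
  have "total_loans y j - ((\<Sum>i\<in>UNIV. (y $ i $ j)\<^sup>2) + (total_loans y j)\<^sup>2) / (2 * d $ j)
     = total_loans x j - ((\<Sum>i\<in>UNIV. (x $ i $ j)\<^sup>2) + (total_loans x j)\<^sup>2) / (2 * d $ j)
       + (total_loans (y - x) j - (total_loans x j * total_loans (y - x) j
           + (\<Sum>i\<in>UNIV. x $ i $ j * (y - x) $ i $ j)) / d $ j)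
       - ((\<Sum>i\<in>UNIV. ((y - x) $ i $ j)\<^sup>2) + (total_loans (y - x) j)\<^sup>2) / d $ j / 2" for j
  proof -
    have "(\<Sum>i\<in>UNIV. (y $ i $ j)\<^sup>2) = (\<Sum>i\<in>UNIV. (x $ i $ j)\<^sup>2)
        + 2 * (\<Sum>i\<in>UNIV. x $ i $ j * (y $ i $ j - x $ i $ j)) + (\<Sum>i\<in>UNIV. (y $ i $ j - x $ i $ j)\<^sup>2)"
      by (simp add: sum.distrib[symmetric] sum_distrib_left power2_eq_square algebra_simps)
    then show ?thesis
      using d_pos[rule_format, of j] by (simp add: total_loans_diff field_simps power2_eq_square)
  qed
  then show ?thesis
    unfolding potential_def potential_deriv_by_columns potential_quad_def
    by (simp add: sum.distrib sum_subtractf sum_divide_distrib)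
qed

lemma weighted_sqnorm_nonneg:
  assumes d_pos: "\<forall>j. d $ j > 0"
  shows "0 \<le> weighted_sqnorm d v"
  unfolding weighted_sqnorm_def using d_pos by (intro sum_nonneg) (simp add: less_imp_le)

lemma weighted_sqnorm_uminus: "weighted_sqnorm d (- v) = weighted_sqnorm d v"
  by (simp add: weighted_sqnorm_def)

lemma weighted_sqnorm_le_potential_quad:
  fixes d :: "real^'n::finite" and v :: "real^'n^'m::finite"
  assumes d_pos: "\<forall>j. d $ j > 0"
  shows "weighted_sqnorm d v \<le> potential_quad d v"
proof -
  have "weighted_sqnorm d v = (\<Sum>j\<in>UNIV. (\<Sum>i\<in>UNIV. (v $ i $ j)\<^sup>2) / d $ j)"
    unfolding weighted_sqnorm_def by (subst sum.swap) (simp add: sum_divide_distrib)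
  also have "\<dots> \<le> potential_quad d v"
    unfolding potential_quad_def using d_pos by (intro sum_mono divide_right_mono) (auto simp: less_imp_le)
  finally show ?thesis .
qed

lemma sq_le_weighted_sqnorm:
  fixes d :: "real^'n::finite" and v :: "real^'n^'m::finite"
  assumes d_pos: "\<forall>j. d $ j > 0"
  shows "(v $ i $ j)\<^sup>2 \<le> d $ j * weighted_sqnorm d v"
proof -
  have "(v $ i $ j)\<^sup>2 / d $ j \<le> (\<Sum>j'\<in>UNIV. (v $ i $ j')\<^sup>2 / d $ j')"
    using d_pos by (intro member_le_sum) (auto simp: less_imp_le)
  also have "\<dots> \<le> weighted_sqnorm d v"
    unfolding weighted_sqnorm_def using d_pos
    by (intro member_le_sum[where f = "\<lambda>i. \<Sum>j'\<in>UNIV. (v $ i $ j')\<^sup>2 / d $ j'"] sum_nonneg)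
       (auto simp: less_imp_le)
  finally show ?thesis
    using d_pos[rule_format, of j] by (simp add: field_simps)
qed

lemma weighted_sqnorm_nonpos_imp_zero:
  fixes d :: "real^'n::finite" and v :: "real^'n^'m::finite"
  assumes d_pos: "\<forall>j. d $ j > 0" and "weighted_sqnorm d v \<le> 0"
  shows "v = 0"
proof -
  have "(v $ i $ j)\<^sup>2 \<le> 0" for i j
    using sq_le_weighted_sqnorm[OF d_pos, of v i j] assms by (smt (verit) mult_nonneg_nonpos)
  then show ?thesis by (simp add: vec_eq_iff)
qed

lemma potential_le_linearization:
  fixes d :: "real^'n::finite" and x y :: "real^'n^'m::finite"
  assumes d_pos: "\<forall>j. d $ j > 0"
  shows "potential d y + weighted_sqnorm d (y - x) / 2 \<le> potential d x + potential_deriv d x (y - x)"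
  using potential_expansion[OF d_pos, of y x] weighted_sqnorm_le_potential_quad[OF d_pos, of "y - x"]
  by linarith

lemma potential_replace_strat:
  fixes d :: "real^'n::finite" and x :: "real^'n^'m::finite"
  assumes d_pos: "\<forall>j. d $ j > 0"
  shows "potential d (replace_strat x i z) - potential d x = deviation_gain d x i z"
proof -
  have row: "(replace_strat x i z - x) $ k $ j = (if k = i then z $ j - x $ i $ j else 0)" for k j
    by (simp add: replace_strat_nth)
  have "potential_deriv d x (replace_strat x i z - x)
      = (\<Sum>j\<in>UNIV. potential_marginal d x i j * (z $ j - x $ i $ j))"
  proof -
    have "potential_deriv d x (replace_strat x i z - x) = (\<Sum>k\<in>UNIV. if k = i
        then (\<Sum>j\<in>UNIV. potential_marginal d x i j * (z $ j - x $ i $ j)) else 0)"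
      unfolding potential_deriv_def row by (rule sum.cong) auto
    then show ?thesis by simp
  qed
  moreover have "potential_quad d (replace_strat x i z - x) = 2 * (\<Sum>j\<in>UNIV. (z $ j - x $ i $ j)\<^sup>2 / d $ j)"
    unfolding potential_quad_def row
    by (simp add: if_distrib[of power2] total_loans_diff total_loans_replace_strat sum_distrib_left
        cong: if_cong)
  ultimately show ?thesis
    using potential_expansion[OF d_pos, of "replace_strat x i z" x] by (simp add: deviation_gain_def)
qed

lemma utility_replace_strat:
  fixes d :: "real^'n::finite" and x :: "real^'n^'m::finite"
  assumes d_pos: "\<forall>j. d $ j > 0"
  shows "utility d rmax rmin (replace_strat x i z) i - utility d rmax rmin x i
    = (rmax - rmin) * deviation_gain d x i z"
proof -
  have "(rate d rmax rmin (replace_strat x i z) j - rmin) * z $ j - (rate d rmax rmin x j - rmin) * x $ i $ j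
     = (rmax - rmin) * (potential_marginal d x i j * (z $ j - x $ i $ j) - (z $ j - x $ i $ j)\<^sup>2 / d $ j)" for j
    using d_pos[rule_format, of j]
    by (simp add: rate_def potential_marginal_def total_loans_replace_strat field_simps power2_eq_square
        flip: total_loans_def)
  then show ?thesis
    by (simp add: utility_def deviation_gain_def replace_strat_nth right_diff_distrib sum_distrib_left
        flip: sum_subtractf)
qed

lemma is_pure_NE_iff_deviation_gain:
  fixes d :: "real^'n::finite" and x :: "real^'n^'m::finite"
  assumes d_pos: "\<forall>j. d $ j > 0" and rmin_lt: "rmin < rmax"
  shows "is_pure_NE c d rmax rmin x \<longleftrightarrow>
    x \<in> strat_space c \<and> (\<forall>i. \<forall>z\<in>strat_set c i. deviation_gain d x i z \<le> 0)"
proof -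
  have "utility d rmax rmin (replace_strat x i z) i \<le> utility d rmax rmin x i
      \<longleftrightarrow> deviation_gain d x i z \<le> 0" for i z
    using utility_replace_strat[OF d_pos, of rmax rmin x i z] rmin_lt
    by (smt (verit) mult_le_0_iff)
  then show ?thesis by (simp add: is_pure_NE_def)
qed

lemma best_resp_iff_deviation_gain:
  fixes d :: "real^'n::finite" and x :: "real^'n^'m::finite"
  assumes d_pos: "\<forall>j. d $ j > 0" and rmin_lt: "rmin < rmax"
  shows "z \<in> best_resp c d rmax rmin i x \<longleftrightarrow>
    z \<in> strat_set c i \<and> (\<forall>z'\<in>strat_set c i. deviation_gain d x i z' \<le> deviation_gain d x i z)"
proof -
  have "utility d rmax rmin (replace_strat x i z') i \<le> utility d rmax rmin (replace_strat x i z) i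
      \<longleftrightarrow> deviation_gain d x i z' \<le> deviation_gain d x i z" for z'
    using utility_replace_strat[OF d_pos, of rmax rmin x i z] utility_replace_strat[OF d_pos, of rmax rmin x i z']
      rmin_lt by (smt (verit) mult_le_cancel_left_pos)
  then show ?thesis by (simp add: best_resp_def)
qed

lemma convex_strat_set: "convex (strat_set c i)"
proof (rule convexI)
  fix y z :: "real^'n" and u v :: real
  assume y: "y \<in> strat_set c i" and z: "z \<in> strat_set c i" and uv: "0 \<le> u" "0 \<le> v" "u + v = 1"
  have "(\<Sum>j\<in>UNIV. (u *\<^sub>R y + v *\<^sub>R z) $ j) = u * (\<Sum>j\<in>UNIV. y $ j) + v * (\<Sum>j\<in>UNIV. z $ j)"
    by (simp add: sum.distrib sum_distrib_left)
  also have "\<dots> \<le> c $ i"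
    using y z uv by (intro convex_bound_le) (auto simp: strat_set_def)
  finally show "u *\<^sub>R y + v *\<^sub>R z \<in> strat_set c i"
    using y z uv by (auto simp: strat_set_def)
qed

lemma deviation_gain_segment:
  "deviation_gain d x i ((1 - \<theta>) *\<^sub>R x $ i + \<theta> *\<^sub>R z)
    = \<theta> * (\<Sum>j\<in>UNIV. potential_marginal d x i j * (z $ j - x $ i $ j))
      - \<theta>\<^sup>2 * (\<Sum>j\<in>UNIV. (z $ j - x $ i $ j)\<^sup>2 / d $ j)"
  by (simp add: deviation_gain_def sum_distrib_left algebra_simps power2_eq_square)

lemma is_pure_NE_row_deriv_nonpos:
  fixes d :: "real^'n::finite" and x :: "real^'n^'m::finite"
  assumes d_pos: "\<forall>j. d $ j > 0" and rmin_lt: "rmin < rmax"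
    and ne: "is_pure_NE c d rmax rmin x" and z: "z \<in> strat_set c i"
  shows "(\<Sum>j\<in>UNIV. potential_marginal d x i j * (z $ j - x $ i $ j)) \<le> 0"
proof -
  define A where "A = (\<Sum>j\<in>UNIV. potential_marginal d x i j * (z $ j - x $ i $ j))"
  define B where "B = (\<Sum>j\<in>UNIV. (z $ j - x $ i $ j)\<^sup>2 / d $ j)"
  have "A \<le> \<theta> * B" if \<theta>: "0 < \<theta>" "\<theta> \<le> 1" for \<theta>
  proof -
    have "x \<in> strat_space c" and gain: "\<forall>i. \<forall>z\<in>strat_set c i. deviation_gain d x i z \<le> 0"
      using ne by (simp_all add: is_pure_NE_iff_deviation_gain[OF d_pos rmin_lt])
    then have "(1 - \<theta>) *\<^sub>R x $ i + \<theta> *\<^sub>R z \<in> strat_set c i"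
      using z \<theta> by (intro convexD[OF convex_strat_set]) (auto simp: strat_space_def)
    then have "\<theta> * A - \<theta>\<^sup>2 * B \<le> 0"
      using gain by (force simp: deviation_gain_segment A_def B_def)
    then show ?thesis
      using \<theta> by (simp add: power2_eq_square algebra_simps)
  qed
  then have "\<forall>\<^sub>F \<theta> in at_right 0. A \<le> \<theta> * B"
    by (auto simp: eventually_at_right_field intro: exI[of _ 1])
  moreover have "((\<lambda>\<theta>. \<theta> * B) \<longlongrightarrow> 0) (at_right 0)"
    by (auto intro!: tendsto_eq_intros)
  ultimately show ?thesis
    unfolding A_def[symmetric] by (intro tendsto_lowerbound) auto
qed

lemma is_pure_NE_deriv_nonpos:
  fixes d :: "real^'n::finite" and x :: "real^'n^'m::finite"
  assumes d_pos: "\<forall>j. d $ j > 0" and rmin_lt: "rmin < rmax"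
    and ne: "is_pure_NE c d rmax rmin x" and y: "y \<in> strat_space c"
  shows "potential_deriv d x (y - x) \<le> 0"
  unfolding potential_deriv_def using y
  by (auto intro!: sum_nonpos is_pure_NE_row_deriv_nonpos[OF d_pos rmin_lt ne] simp: strat_space_def)

lemma is_pure_NE_potential_gap:
  fixes d :: "real^'n::finite" and x :: "real^'n^'m::finite"
  assumes d_pos: "\<forall>j. d $ j > 0" and rmin_lt: "rmin < rmax"
    and ne: "is_pure_NE c d rmax rmin x" and y: "y \<in> strat_space c"
  shows "potential d y + weighted_sqnorm d (y - x) / 2 \<le> potential d x"
  using potential_le_linearization[OF d_pos, of y x] is_pure_NE_deriv_nonpos[OF d_pos rmin_lt ne y]
  by linarith

lemma is_pure_NE_unique:
  fixes d :: "real^'n::finite" and x :: "real^'n^'m::finite"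
  assumes d_pos: "\<forall>j. d $ j > 0" and rmin_lt: "rmin < rmax"
    and ne_x: "is_pure_NE c d rmax rmin x" and ne_y: "is_pure_NE c d rmax rmin y"
  shows "y = x"
proof -
  have "x \<in> strat_space c" "y \<in> strat_space c"
    using ne_x ne_y by (simp_all add: is_pure_NE_def)
  then have "weighted_sqnorm d (y - x) \<le> 0"
    using is_pure_NE_potential_gap[OF d_pos rmin_lt ne_x, of y] is_pure_NE_potential_gap[OF d_pos rmin_lt ne_y, of x]
      weighted_sqnorm_uminus[of d "y - x"] by simp
  then have "y - x = 0"
    by (rule weighted_sqnorm_nonpos_imp_zero[OF d_pos])
  then show ?thesis by simp
qed

lemma compact_strat_space: "compact (strat_space c)"
proof -
  have "strat_space c = (\<Inter>i. (\<Inter>j. {s. 0 \<le> s $ i $ j}) \<inter> {s. (\<Sum>j\<in>UNIV. s $ i $ j) \<le> c $ i})"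
    by (auto simp: strat_space_def strat_set_def)
  also have "closed \<dots>"
    by (auto intro!: closed_INT closed_Int closed_Collect_le continuous_intros)
  finally have "closed (strat_space c)" .
  moreover have "norm s \<le> (\<Sum>i\<in>UNIV. \<bar>c $ i\<bar>)" if s: "s \<in> strat_space c" for s
  proof -
    have "norm s \<le> (\<Sum>i\<in>UNIV. norm (s $ i))"
      unfolding norm_vec_def by (rule L2_set_le_sum) simp
    also have "\<dots> \<le> (\<Sum>i\<in>UNIV. \<bar>c $ i\<bar>)"
    proof (rule sum_mono)
      fix i
      have "norm (s $ i) \<le> (\<Sum>j\<in>UNIV. \<bar>s $ i $ j\<bar>)"
        by (rule norm_le_l1_cart)
      also have "\<dots> \<le> c $ i"
        using s by (simp add: strat_space_def strat_set_def)
      finally show "norm (s $ i) \<le> \<bar>c $ i\<bar>" by simp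
    qed
    finally show ?thesis .
  qed
  then have "bounded (strat_space c)"
    unfolding bounded_iff by blast
  ultimately show ?thesis
    by (simp add: compact_eq_bounded_closed)
qed

lemma is_pure_NE_exists:
  fixes c :: "real^'m::finite" and d :: "real^'n::finite"
  assumes c_pos: "\<forall>i. c $ i > 0" and d_pos: "\<forall>j. d $ j > 0" and rmin_lt: "rmin < rmax"
  shows "\<exists>x. is_pure_NE c d rmax rmin x"
proof -
  have "(0 :: real^'n^'m) \<in> strat_space c"
    using c_pos by (simp add: strat_space_def strat_set_def less_imp_le)
  moreover have "continuous_on (strat_space c) (potential d :: real^'n^'m \<Rightarrow> real)"
    using has_derivative_potential[OF d_pos] by (rule has_derivative_continuous_on)
  ultimately obtain x where x: "x \<in> strat_space c"
    and max: "\<forall>y\<in>strat_space c. potential d y \<le> potential d x"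
    using continuous_attains_sup[OF compact_strat_space] by blast
  have "deviation_gain d x i z \<le> 0" if "z \<in> strat_set c i" for i z
  proof -
    have "replace_strat x i z \<in> strat_space c"
      using x that by (simp add: strat_space_def replace_strat_nth)
    then have "potential d (replace_strat x i z) \<le> potential d x"
      using max by blast
    then show ?thesis
      using potential_replace_strat[OF d_pos, of x i z] by linarith
  qed
  then have "is_pure_NE c d rmax rmin x"
    using x by (simp add: is_pure_NE_iff_deviation_gain[OF d_pos rmin_lt])
  then show ?thesis ..
qed

lemma best_resp_deriv_lower_bound:
  fixes d :: "real^'n::finite" and x y w :: "real^'n^'m::finite"
  assumes d_pos: "\<forall>j. d $ j > 0" and rmin_lt: "rmin < rmax"
    and x: "x \<in> strat_space c" and w: "w \<in> strat_space c"
    and br: "\<forall>i. y $ i \<in> best_resp c d rmax rmin i x"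
  shows "(potential d w - potential d x) / 2 \<le> potential_deriv d x (y - x)"
proof -
  define A where "A i = (\<Sum>j\<in>UNIV. potential_marginal d x i j * (w $ i $ j - x $ i $ j))" for i
  define B where "B i = (\<Sum>j\<in>UNIV. (w $ i $ j - x $ i $ j)\<^sup>2 / d $ j)" for i
  have row: "A i / 2 - B i / 4 \<le> (\<Sum>j\<in>UNIV. potential_marginal d x i j * (y $ i $ j - x $ i $ j))" for i
  proof -
    have "(1 - 1/2) *\<^sub>R x $ i + (1/2) *\<^sub>R w $ i \<in> strat_set c i"
      using x w by (intro convexD[OF convex_strat_set]) (auto simp: strat_space_def)
    then have "deviation_gain d x i ((1 - 1/2) *\<^sub>R x $ i + (1/2) *\<^sub>R w $ i)
        \<le> deviation_gain d x i (y $ i)"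
      using br by (simp add: best_resp_iff_deviation_gain[OF d_pos rmin_lt])
    moreover have "deviation_gain d x i (y $ i)
        \<le> (\<Sum>j\<in>UNIV. potential_marginal d x i j * (y $ i $ j - x $ i $ j))"
      unfolding deviation_gain_def using d_pos by (simp add: sum_nonneg less_imp_le)
    ultimately show ?thesis
      unfolding deviation_gain_segment A_def B_def by (simp add: power2_eq_square)
  qed
  (* With weight 1/2 the loss B i / 4 is exactly paid for by the strong concavity of the potential. *)
  have "potential_deriv d x (w - x) / 2 - weighted_sqnorm d (w - x) / 4 = (\<Sum>i\<in>UNIV. A i / 2 - B i / 4)"
    by (simp add: potential_deriv_def weighted_sqnorm_def A_def B_def sum_subtractf sum_divide_distrib)
  also have "\<dots> \<le> potential_deriv d x (y - x)"
    using row by (simp add: potential_deriv_def sum_mono)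
  finally show ?thesis
    using potential_le_linearization[OF d_pos, of w x] by argo
qed

lemma exp_decay_of_deriv_le:
  fixes w w' :: "real \<Rightarrow> real" and k t :: real
  assumes der: "\<And>t. t \<ge> 0 \<Longrightarrow> (w has_real_derivative w' t) (at t within {0..})"
    and le: "\<And>t. t \<ge> 0 \<Longrightarrow> w' t \<le> - k * w t"
    and t: "t \<ge> 0"
  shows "w t \<le> w 0 * exp (- k * t)"
proof -
  define f where "f x = exp (k * x) * w x" for x
  have f': "(f has_real_derivative exp (k * x) * (k * w x + w' x)) (at x within {0..})" if "x \<ge> 0" for x
    unfolding f_def using der[OF that] by (auto intro!: derivative_eq_intros simp: algebra_simps)
  have "f t \<le> f 0"
  proof (rule DERIV_nonpos_imp_decreasing_open[OF t])
    fix x :: real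
    assume x: "0 < x" "x < t"
    then have "at x within {0..} = at x"
      by (intro at_within_interior) auto
    moreover have "exp (k * x) * (k * w x + w' x) \<le> 0"
      using le[of x] x by (simp add: mult_nonneg_nonpos)
    ultimately show "\<exists>y. (f has_real_derivative y) (at x) \<and> y \<le> 0"
      using f'[of x] x by auto
  next
    show "continuous_on {0..t} f"
      by (rule DERIV_continuous_on, rule has_field_derivative_subset[OF f']) auto
  qed
  have "w t = exp (- k * t) * f t"
    by (simp add: f_def mult.assoc[symmetric] exp_add[symmetric])
  also have "\<dots> \<le> exp (- k * t) * f 0"
    using \<open>f t \<le> f 0\<close> by simp
  finally show ?thesis
    by (simp add: f_def mult.commute)
qed

lemma relaxation_preserves_linear_bound:
  fixes x y :: "real \<Rightarrow> 'a::real_normed_vector" and l :: "'a \<Rightarrow> real"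
  assumes l: "bounded_linear l"
    and ode: "\<And>t. t \<ge> 0 \<Longrightarrow> (x has_vector_derivative (y t - x t)) (at t within {0..})"
    and target: "\<And>t. t \<ge> 0 \<Longrightarrow> l (y t) \<le> b"
    and init: "l (x 0) \<le> b" and t: "t \<ge> 0"
  shows "l (x t) \<le> b"
proof -
  have "l (x t) - b \<le> (l (x 0) - b) * exp (- 1 * t)"
  proof (rule exp_decay_of_deriv_le[OF _ _ t])
    fix t :: real
    assume "t \<ge> 0"
    have "((\<lambda>t. l (x t)) has_real_derivative l (y t) - l (x t)) (at t within {0..})"
      using bounded_linear.has_vector_derivative[OF l ode[OF \<open>t \<ge> 0\<close>]]
      by (simp add: has_real_derivative_iff_has_vector_derivative linear_diff[OF bounded_linear.linear[OF l]])
    then show "((\<lambda>t. l (x t) - b) has_real_derivative l (y t) - l (x t)) (at t within {0..})"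
      by (auto intro!: derivative_eq_intros)
    show "l (y t) - l (x t) \<le> - 1 * (l (x t) - b)"
      using target[OF \<open>t \<ge> 0\<close>] by simp
  qed
  moreover have "(l (x 0) - b) * exp (- 1 * t) \<le> 0"
    using init by (simp add: mult_nonpos_nonneg)
  ultimately show ?thesis by simp
qed

lemma strat_space_forward_invariant:
  fixes s shat :: "real \<Rightarrow> real^'n::finite^'m::finite"
  assumes init: "s 0 \<in> strat_space c" and target: "\<And>t. t \<ge> 0 \<Longrightarrow> shat t \<in> strat_space c"
    and ode: "\<And>t. t \<ge> 0 \<Longrightarrow> (s has_vector_derivative (shat t - s t)) (at t within {0..})"
    and t: "t \<ge> 0"
  shows "s t \<in> strat_space c"
proof -
  have "- s t $ i $ j \<le> 0" for i j
    using init target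
    by (intro relaxation_preserves_linear_bound[where l = "\<lambda>s. - s $ i $ j", OF _ ode _ _ t]
        bounded_linear_minus bounded_linear_vec_nth_nth) (auto simp: strat_space_def strat_set_def)
  moreover have "(\<Sum>j\<in>UNIV. s t $ i $ j) \<le> c $ i" for i
    using init target
    by (intro relaxation_preserves_linear_bound[where l = "\<lambda>s. \<Sum>j\<in>UNIV. s $ i $ j", OF _ ode _ _ t]
        bounded_linear_sum bounded_linear_vec_nth_nth) (auto simp: strat_space_def strat_set_def)
  ultimately show ?thesis
    by (simp add: strat_space_def strat_set_def)
qed

lemma potential_gap_exp_decay:
  fixes d :: "real^'n::finite" and s shat :: "real \<Rightarrow> real^'n^'m::finite"
  assumes d_pos: "\<forall>j. d $ j > 0" and rmin_lt: "rmin < rmax" and w: "w \<in> strat_space c"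
    and inv: "\<And>t. t \<ge> 0 \<Longrightarrow> s t \<in> strat_space c"
    and br: "\<And>t i. t \<ge> 0 \<Longrightarrow> shat t $ i \<in> best_resp c d rmax rmin i (s t)"
    and ode: "\<And>t. t \<ge> 0 \<Longrightarrow> (s has_vector_derivative (shat t - s t)) (at t within {0..})"
    and t: "t \<ge> 0"
  shows "potential d w - potential d (s t) \<le> (potential d w - potential d (s 0)) * exp (- t / 2)"
proof -
  have "potential d w - potential d (s t)
      \<le> (potential d w - potential d (s 0)) * exp (- (1/2) * t)"
  proof (rule exp_decay_of_deriv_le[OF _ _ t])
    fix t :: real
    assume "t \<ge> 0"
    have "((potential d \<circ> s) has_vector_derivative potential_deriv d (s t) (shat t - s t)) (at t within {0..})"
      by (rule vector_derivative_diff_chain_within[OF ode[OF \<open>t \<ge> 0\<close>] has_derivative_potential[OF d_pos]])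
    then show "((\<lambda>t. potential d w - potential d (s t)) has_real_derivative
        - potential_deriv d (s t) (shat t - s t)) (at t within {0..})"
      by (auto intro!: derivative_eq_intros simp: o_def simp flip: has_real_derivative_iff_has_vector_derivative)
    show "- potential_deriv d (s t) (shat t - s t) \<le> - (1/2) * (potential d w - potential d (s t))"
      using best_resp_deriv_lower_bound[OF d_pos rmin_lt inv w] br \<open>t \<ge> 0\<close> by force
  qed
  then show ?thesis by simp
qed

lemma tendsto_of_weighted_sqnorm_tendsto_0:
  fixes d :: "real^'n::finite" and f :: "'a \<Rightarrow> real^'n^'m::finite"
  assumes d_pos: "\<forall>j. d $ j > 0" and lim: "((\<lambda>t. weighted_sqnorm d (f t - l)) \<longlongrightarrow> 0) F"
  shows "(f \<longlongrightarrow> l) F"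
proof (intro vec_tendstoI)
  fix i j
  have bound: "norm (f t $ i $ j - l $ i $ j) \<le> sqrt (d $ j * weighted_sqnorm d (f t - l))" for t
    using sq_le_weighted_sqnorm[OF d_pos, of "f t - l" i j] by (simp add: real_le_rsqrt)
  have "((\<lambda>t. sqrt (d $ j * weighted_sqnorm d (f t - l))) \<longlongrightarrow> 0) F"
    using tendsto_real_sqrt[OF tendsto_mult_right_zero[OF lim]] by simp
  then have "((\<lambda>t. f t $ i $ j - l $ i $ j) \<longlongrightarrow> 0) F"
    by (rule Lim_null_comparison[OF always_eventually[OF allI[OF bound]]])
  then show "((\<lambda>t. f t $ i $ j) \<longlongrightarrow> l $ i $ j) F"
    by (rule LIM_zero_cancel)
qed

lemma best_resp_dynamics_tendsto_NE:
  fixes d :: "real^'n::finite" and s shat :: "real \<Rightarrow> real^'n^'m::finite"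
  assumes d_pos: "\<forall>j. d $ j > 0" and rmin_lt: "rmin < rmax"
    and ne: "is_pure_NE c d rmax rmin e" and init: "s 0 \<in> strat_space c"
    and br: "\<And>t i. t \<ge> 0 \<Longrightarrow> shat t $ i \<in> best_resp c d rmax rmin i (s t)"
    and ode: "\<And>t. t \<ge> 0 \<Longrightarrow> (s has_vector_derivative (shat t - s t)) (at t within {0..})"
  shows "(s \<longlongrightarrow> e) at_top"
proof -
  have e: "e \<in> strat_space c"
    using ne by (simp add: is_pure_NE_def)
  have "shat t \<in> strat_space c" if "t \<ge> 0" for t
    using br[OF that] by (simp add: strat_space_def best_resp_def)
  then have inv: "s t \<in> strat_space c" if "t \<ge> 0" for t
    using strat_space_forward_invariant[OF init _ ode that] by blast
  define gap0 where "gap0 = potential d e - potential d (s 0)"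
  have bound: "weighted_sqnorm d (s t - e) \<le> 2 * gap0 * exp (- t / 2)" if "t \<ge> 0" for t
    using is_pure_NE_potential_gap[OF d_pos rmin_lt ne inv[OF that]]
      potential_gap_exp_decay[OF d_pos rmin_lt e inv br ode that]
    unfolding gap0_def by linarith
  have "\<forall>\<^sub>F t in at_top. weighted_sqnorm d (s t - e) \<le> 2 * gap0 * exp (- t / 2)"
    using eventually_ge_at_top[of 0] by eventually_elim (rule bound)
  moreover have "((\<lambda>t. 2 * gap0 * exp (- t / 2)) \<longlongrightarrow> 0) at_top"
    by real_asymp
  ultimately have "((\<lambda>t. weighted_sqnorm d (s t - e)) \<longlongrightarrow> 0) at_top"
    by (rule tendsto_sandwich[OF always_eventually[OF allI[OF weighted_sqnorm_nonneg[OF d_pos]]] _ tendsto_const])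
  then show ?thesis
    by (rule tendsto_of_weighted_sqnorm_tendsto_0[OF d_pos])
qed

theorem theorem4p8:
  fixes c :: "real^'m::finite" and d :: "real^'n::finite" and rmax rmin :: real
    and s shat :: "real \<Rightarrow> real^'n^'m"
  assumes c_pos: "\<forall>i. c $ i > 0"
    and d_pos: "\<forall>j. d $ j > 0"
    and rmin_pos: "0 < rmin" and rmin_lt: "rmin < rmax"
    and init: "s 0 \<in> strat_space c"
    and br: "\<forall>t\<ge>0. \<forall>i. shat t $ i \<in> best_resp c d rmax rmin i (s t)"
    and ode: "\<forall>t\<ge>0. (s has_vector_derivative (shat t - s t)) (at t within {0..})"
  shows "\<exists>sstar. is_pure_NE c d rmax rmin sstar
           \<and> (\<forall>s'. is_pure_NE c d rmax rmin s' \<longrightarrow> s' = sstar)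
           \<and> (s \<longlongrightarrow> sstar) at_top"
proof -
  obtain sstar where ne: "is_pure_NE c d rmax rmin sstar"
    using is_pure_NE_exists[OF c_pos d_pos rmin_lt] by blast
  moreover have "(s \<longlongrightarrow> sstar) at_top"
    using init br ode by (intro best_resp_dynamics_tendsto_NE[OF d_pos rmin_lt ne]) auto
  ultimately show ?thesis
    using is_pure_NE_unique[OF d_pos rmin_lt ne] by blast
qed

end
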